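(* The logic $\mathsf{iCB}:=\mathsf{iCC}\oplus(((p\mathrel{\Box\!\!\!\rightarrow} q)\wedge(q\mathrel{\Box\!\!\!\rightarrow} p)\wedge(p\mathrel{\Box\!\!\!\rightarrow} r))\to(q\mathrel{\Box\!\!\!\rightarrow} r))\oplus((p\mathrel{\Box\!\!\!\rightarrow} q)\to(p\mathrel{\Box\!\!\!\rightarrow}(p\mathrel{\Box\!\!\!\rightarrow} q)))$ is sound and complete with respect to the class of cautious conditional frames satisfying, for all worlds $x$ and upsets $a,b$: if $R_a[x]\subseteq b$ and $R_b[x]\subseteq a$ then ${\uparrow}R_a[x]={\uparrow}R_b[x]$; and $(R_a\circ R_a)\subseteq(R_a\circ\leq)$.
   Context: Formulas: $\phi ::= p\mid\bot\mid\phi\wedge\phi\mid\phi\vee\phi\mid\phi\to\phi\mid\phi\mathrel{\Box\!\!\!\rightarrow}\phi$. $\mathsf{ICK}\oplus\Gamma$ is the smallest set containing intuitionistic propositional logic, $\Gamma$, $(p\mathrel{\Box\!\!\!\rightarrow}(q\wedge r))\leftrightarrow((p\mathrel{\Box\!\!\!\rightarrow} q)\wedge(p\mathrel{\Box\!\!\!\rightarrow} r))$ and $(p\mathrel{\Box\!\!\!\rightarrow}\top)\leftrightarrow\top$, closed under uniform substitution, modus ponens and congruence rules for both arguments of $\mathrel{\Box\!\!\!\rightarrow}$. $\mathsf{iCC}=\mathsf{ICK}\oplus(p\mathrel{\Box\!\!\!\rightarrow} p)\oplus(((p\mathrel{\Box\!\!\!\rightarrow} q)\wedge((p\wedge q)\mathrel{\Box\!\!\!\rightarrow}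 r))\to(p\mathrel{\Box\!\!\!\rightarrow} r))\oplus(((p\mathrel{\Box\!\!\!\rightarrow} q)\wedge(p\mathrel{\Box\!\!\!\rightarrow} r))\to((p\wedge q)\mathrel{\Box\!\!\!\rightarrow} r))$. A conditional frame is $(X,\leq,\mathcal{R})$, $(X,\leq)$ a nonempty preorder, $\mathcal{R}=\{R_a\mid a\text{ an upset}\}$ with $(\leq\circ R_a)\subseteq(R_a\circ\leq)$; $x\models\phi\mathrel{\Box\!\!\!\rightarrow}\psi$ iff every $y$ with $xR_{V(\phi)}y$ satisfies $\psi$. A cautious conditional frame satisfies $R_a[x]\subseteq a$ and ($R_a[x]\subseteq b\subseteq a$ implies ${\uparrow}R_a[x]={\uparrow}R_b[x]$) for all $x$ and upsets $a,b$. *)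

theory Defs
  imports Main
begin

datatype form =
    Atom nat
  | Bot
  | And form form
  | Or form form
  | Imp form form
  | Cond form form

definition Top :: form where "Top = Imp Bot Bot"
definition Iff :: "form \<Rightarrow> form \<Rightarrow> form" where
  "Iff a b = And (Imp a b) (Imp b a)"

fun subst :: "(nat \<Rightarrow> form) \<Rightarrow> form \<Rightarrow> form" where
  "subst s (Atom n) = s n"
| "subst s Bot = Bot"
| "subst s (And a b) = And (subst s a) (subst s b)"
| "subst s (Or a b) = Or (subst s a) (subst s b)"
| "subst s (Imp a b) = Imp (subst s a) (subst s b)"
| "subst s (Cond a b) = Cond (subst s a) (subst s b)"

abbreviation "P \<equiv> Atom 0"
abbreviation "Q \<equiv> Atom 1"
abbreviation "Rr \<equiv> Atom 2"

inductive_set IPC :: "form set" where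
  k: "Imp a (Imp b a) \<in> IPC"
| s: "Imp (Imp a (Imp b c)) (Imp (Imp a b) (Imp a c)) \<in> IPC"
| c1: "Imp (And a b) a \<in> IPC"
| c2: "Imp (And a b) b \<in> IPC"
| c3: "Imp a (Imp b (And a b)) \<in> IPC"
| d1: "Imp a (Or a b) \<in> IPC"
| d2: "Imp b (Or a b) \<in> IPC"
| d3: "Imp (Imp a c) (Imp (Imp b c) (Imp (Or a b) c)) \<in> IPC"
| efq: "Imp Bot a \<in> IPC"
| mp: "Imp a b \<in> IPC \<Longrightarrow> a \<in> IPC \<Longrightarrow> b \<in> IPC"

inductive_set ICK_plus :: "form set \<Rightarrow> form set" for G :: "form set" where
  ipc: "a \<in> IPC \<Longrightarrow> a \<in> ICK_plus G"
| gam: "a \<in> G \<Longrightarrow> a \<in> ICK_plus G"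
| cm: "Iff (Cond P (And Q Rr)) (And (Cond P Q) (Cond P Rr)) \<in> ICK_plus G"
| cn: "Iff (Cond P Top) Top \<in> ICK_plus G"
| us: "a \<in> ICK_plus G \<Longrightarrow> subst s a \<in> ICK_plus G"
| mp: "Imp a b \<in> ICK_plus G \<Longrightarrow> a \<in> ICK_plus G \<Longrightarrow> b \<in> ICK_plus G"
| congL: "Iff a b \<in> ICK_plus G \<Longrightarrow> Iff (Cond a c) (Cond b c) \<in> ICK_plus G"
| congR: "Iff a b \<in> ICK_plus G \<Longrightarrow> Iff (Cond c a) (Cond c b) \<in> ICK_plus G"

definition iCC_axioms :: "form set" where
  "iCC_axioms = {Cond P P,
     Imp (And (Cond P Q) (Cond (And P Q) Rr)) (Cond P Rr),
     Imp (And (Cond P Q) (Cond P Rr)) (Cond (And P Q) Rr)}"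

definition iCB_axioms :: "form set" where
  "iCB_axioms = iCC_axioms \<union>
    {Imp (And (Cond P Q) (And (Cond Q P) (Cond P Rr))) (Cond Q Rr),
     Imp (Cond P Q) (Cond P (Cond P Q))}"

definition iCB :: "form set" where "iCB = ICK_plus iCB_axioms"

record 'w cframe =
  carrier :: "'w set"
  leq :: "'w \<Rightarrow> 'w \<Rightarrow> bool"
  rel :: "'w set \<Rightarrow> 'w \<Rightarrow> 'w \<Rightarrow> bool"

definition upset :: "('w, 'm) cframe_scheme \<Rightarrow> 'w set \<Rightarrow> bool" where
  "upset F a \<longleftrightarrow> a \<subseteq> carrier F \<and>
     (\<forall>x\<in>a. \<forall>y\<in>carrier F. leq F x y \<longrightarrow> y \<in> a)"

definition img :: "('w, 'm) cframe_scheme \<Rightarrow> 'w set \<Rightarrow> 'w \<Rightarrow> 'w set" where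
  "img F a x = {y. rel F a x y}"

definition up :: "('w, 'm) cframe_scheme \<Rightarrow> 'w set \<Rightarrow> 'w set" where
  "up F S = {y \<in> carrier F. \<exists>s\<in>S. leq F s y}"

text \<open>Relational composition is read diagrammatically: (S o T) relates x to z
  iff x S y and y T z for some y.\<close>
definition cond_frame :: "('w, 'm) cframe_scheme \<Rightarrow> bool" where
  "cond_frame F \<longleftrightarrow>
     carrier F \<noteq> {} \<and>
     (\<forall>x y. leq F x y \<longrightarrow> x \<in> carrier F \<and> y \<in> carrier F) \<and>
     (\<forall>x\<in>carrier F. leq F x x) \<and>
     (\<forall>x y z. leq F x y \<longrightarrow> leq F y z \<longrightarrow> leq F x z) \<and>
     (\<forall>a. upset F a \<longrightarrow>
        (\<forall>x y. rel F a x y \<longrightarrow> x \<in> carrier F \<and> y \<in> carrier F) \<and>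
        (\<forall>x y z. leq F x y \<longrightarrow> rel F a y z \<longrightarrow> (\<exists>w. rel F a x w \<and> leq F w z)))"

definition cautious :: "('w, 'm) cframe_scheme \<Rightarrow> bool" where
  "cautious F \<longleftrightarrow> cond_frame F \<and>
     (\<forall>x\<in>carrier F. \<forall>a b. upset F a \<longrightarrow> upset F b \<longrightarrow>
        img F a x \<subseteq> a \<and>
        (img F a x \<subseteq> b \<and> b \<subseteq> a \<longrightarrow> up F (img F a x) = up F (img F b x)))"

definition iCB_frame :: "('w, 'm) cframe_scheme \<Rightarrow> bool" where
  "iCB_frame F \<longleftrightarrow> cautious F \<and>
     (\<forall>x\<in>carrier F. \<forall>a b. upset F a \<longrightarrow> upset F b \<longrightarrow>
        img F a x \<subseteq> b \<longrightarrow> img F b x \<subseteq> a \<longrightarrow> up F (img F a x) = up F (img F b x)) \<and>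
     (\<forall>a. upset F a \<longrightarrow>
        (\<forall>x y z. rel F a x y \<longrightarrow> rel F a y z \<longrightarrow> (\<exists>w. rel F a x w \<and> leq F w z)))"

fun sat :: "('w, 'm) cframe_scheme \<Rightarrow> (nat \<Rightarrow> 'w set) \<Rightarrow> 'w \<Rightarrow> form \<Rightarrow> bool" where
  "sat F V x (Atom n) \<longleftrightarrow> x \<in> V n"
| "sat F V x Bot \<longleftrightarrow> False"
| "sat F V x (And a b) \<longleftrightarrow> sat F V x a \<and> sat F V x b"
| "sat F V x (Or a b) \<longleftrightarrow> sat F V x a \<or> sat F V x b"
| "sat F V x (Imp a b) \<longleftrightarrow>
     (\<forall>y\<in>carrier F. leq F x y \<longrightarrow> sat F V y a \<longrightarrow> sat F V y b)"
| "sat F V x (Cond a b) \<longleftrightarrow>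
     (\<forall>y. rel F {z \<in> carrier F. sat F V z a} x y \<longrightarrow> sat F V y b)"

definition valid :: "('w, 'm) cframe_scheme \<Rightarrow> form \<Rightarrow> bool" where
  "valid F a \<longleftrightarrow> (\<forall>V. (\<forall>n. upset F (V n)) \<longrightarrow> (\<forall>x\<in>carrier F. sat F V x a))"

end

(*
  Since R_a[x] is contained in a, identity holds.  By
  persistence, an equation "up R_a[x] = up R_b[x]" lets a consequent pass from antecedent a
  to antecedent b; the two frame conditions of this form give cumulative transitivity,
  cautious monotonicity and reciprocity.  Finally (R_a o R_a) <= (R_a o <=) validates
  (p => q) -> (p => (p => q)).

  Completeness uses a canonical frame of prime iCB-theories ordered by inclusion.  For a
  world w and a formula p let succ p w be the set of worlds containing all q with p => q in
  w; then succ p w lies inside the truth set of q iff p => q is in w.  An upset a squeezed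
  between succ p w and the truth set of p gets R_a[w] = succ p w, which by reciprocity does
  not depend on the choice of p; any other upset a gets R_a[w] = a.  Reciprocity and the
  axiom (p => q) -> (p => (p => q)) then yield the frame conditions, and the truth lemma
  holds for the valuation sending each atom to its truth set.
*)

theory Submission
  imports Defs
begin

section \<open>Derivations from hypotheses and prime theories\<close>

text \<open>Only modus ponens acts on hypotheses; substitution and the congruence rules stay inside
  the logic \<open>L\<close>, which is what makes the deduction theorem hold.\<close>

inductive derivable :: "form set \<Rightarrow> form set \<Rightarrow> form \<Rightarrow> bool" for L G where
  logic: "a \<in> L \<Longrightarrow> derivable L G a"
| hyp: "a \<in> G \<Longrightarrow> derivable L G a"
| mp: "derivable L G (Imp a b) \<Longrightarrow> derivable L G a \<Longrightarrow> derivable L G b"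

definition is_theory :: "form set \<Rightarrow> form set \<Rightarrow> bool" where
  "is_theory L T \<longleftrightarrow> (\<forall>a. derivable L T a \<longrightarrow> a \<in> T)"

definition prime_theory :: "form set \<Rightarrow> form set \<Rightarrow> bool" where
  "prime_theory L T \<longleftrightarrow>
     is_theory L T \<and> Bot \<notin> T \<and> (\<forall>a b. Or a b \<in> T \<longrightarrow> a \<in> T \<or> b \<in> T)"

lemma derivable_mono: "derivable L G a \<Longrightarrow> G \<subseteq> H \<Longrightarrow> derivable L H a"
  by (induction rule: derivable.induct) (auto intro: derivable.intros)

lemma derivable_finite_subset:
  "derivable L G a \<Longrightarrow> \<exists>G0 \<subseteq> G. finite G0 \<and> derivable L G0 a"
proof (induction rule: derivable.induct)
  case (logic a)
  then show ?case by (auto intro: derivable.logic)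
next
  case (hyp a)
  then show ?case by (auto intro!: exI[of _ "{a}"] derivable.hyp)
next
  case (mp a b)
  then obtain G1 G2 where "G1 \<subseteq> G" "finite G1" "derivable L G1 (Imp a b)"
    and "G2 \<subseteq> G" "finite G2" "derivable L G2 a"
    by blast
  then show ?case
    by (intro exI[of _ "G1 \<union> G2"]) (auto intro: derivable.mp derivable_mono)
qed

lemma IPC_Imp_self: "Imp a a \<in> IPC"
  using IPC.mp[OF IPC.mp[OF IPC.s IPC.k] IPC.k[of a a]] .

locale ipc_extension =
  fixes L :: "form set"
  assumes IPC_subset: "IPC \<subseteq> L"
    and mp_closed: "Imp a b \<in> L \<Longrightarrow> a \<in> L \<Longrightarrow> b \<in> L"
begin

abbreviation derives :: "form set \<Rightarrow> form \<Rightarrow> bool" (infix "\<turnstile>" 55) where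
  "G \<turnstile> a \<equiv> derivable L G a"

lemma derives_empty_iff: "{} \<turnstile> a \<longleftrightarrow> a \<in> L"
proof
  show "{} \<turnstile> a \<Longrightarrow> a \<in> L"
    by (induction rule: derivable.induct) (auto intro: mp_closed)
qed (rule derivable.logic)

lemma derives_IPC: "a \<in> IPC \<Longrightarrow> G \<turnstile> a"
  using IPC_subset by (blast intro: derivable.logic)

lemma deduction: "insert a G \<turnstile> b \<Longrightarrow> G \<turnstile> Imp a b"
proof (induction rule: derivable.induct)
  case (logic b)
  then show ?case using derivable.mp[OF derives_IPC[OF IPC.k] derivable.logic] by blast
next
  case (hyp b)
  then show ?case
    using derivable.mp[OF derives_IPC[OF IPC.k] derivable.hyp] derives_IPC[OF IPC_Imp_self]
    by blast
next
  case (mp b c)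
  then show ?case using derivable.mp[OF derivable.mp[OF derives_IPC[OF IPC.s]]] by blast
qed

lemma derives_AndI: "G \<turnstile> a \<Longrightarrow> G \<turnstile> b \<Longrightarrow> G \<turnstile> And a b"
  using derivable.mp[OF derivable.mp[OF derives_IPC[OF IPC.c3]]] .

lemma derives_AndD1: "G \<turnstile> And a b \<Longrightarrow> G \<turnstile> a"
  using derivable.mp[OF derives_IPC[OF IPC.c1]] .

lemma derives_AndD2: "G \<turnstile> And a b \<Longrightarrow> G \<turnstile> b"
  using derivable.mp[OF derives_IPC[OF IPC.c2]] .

lemma derives_OrI1: "G \<turnstile> a \<Longrightarrow> G \<turnstile> Or a b"
  using derivable.mp[OF derives_IPC[OF IPC.d1]] .

lemma derives_OrI2: "G \<turnstile> b \<Longrightarrow> G \<turnstile> Or a b"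
  using derivable.mp[OF derives_IPC[OF IPC.d2]] .

lemma derives_OrE:
  "G \<turnstile> Or a b \<Longrightarrow> insert a G \<turnstile> c \<Longrightarrow> insert b G \<turnstile> c \<Longrightarrow> G \<turnstile> c"
  using derivable.mp[OF derivable.mp[OF derivable.mp[OF derives_IPC[OF IPC.d3]]]] deduction
  by blast

lemma derives_BotE: "G \<turnstile> Bot \<Longrightarrow> G \<turnstile> c"
  using derivable.mp[OF derives_IPC[OF IPC.efq]] .

lemma derives_cut: "G \<turnstile> a \<Longrightarrow> insert a G \<turnstile> b \<Longrightarrow> G \<turnstile> b"
  using deduction derivable.mp by blast

lemma theory_logic: "is_theory L T \<Longrightarrow> a \<in> L \<Longrightarrow> a \<in> T"
  unfolding is_theory_def by (blast intro: derivable.logic)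

lemma theory_mp: "is_theory L T \<Longrightarrow> Imp a b \<in> T \<Longrightarrow> a \<in> T \<Longrightarrow> b \<in> T"
  unfolding is_theory_def by (blast intro: derivable.mp derivable.hyp)

lemma theory_logic_mp: "is_theory L T \<Longrightarrow> Imp a b \<in> L \<Longrightarrow> a \<in> T \<Longrightarrow> b \<in> T"
  using theory_logic theory_mp by blast

lemma theory_And_iff: "is_theory L T \<Longrightarrow> And a b \<in> T \<longleftrightarrow> a \<in> T \<and> b \<in> T"
  unfolding is_theory_def by (meson derives_AndI derives_AndD1 derives_AndD2 derivable.hyp)

lemma theory_Iff: "is_theory L T \<Longrightarrow> Iff a b \<in> L \<Longrightarrow> a \<in> T \<longleftrightarrow> b \<in> T"
  unfolding Iff_def by (meson theory_And_iff theory_logic theory_mp)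

lemma lindenbaum:
  assumes "\<not> G \<turnstile> c"
  obtains T where "G \<subseteq> T" "prime_theory L T" "c \<notin> T"
proof -
  let ?A = "{T. G \<subseteq> T \<and> \<not> T \<turnstile> c}"
  have "\<forall>C\<in>chains ?A. \<exists>U\<in>?A. \<forall>X\<in>C. X \<subseteq> U"
  proof
    fix C assume C: "C \<in> chains ?A"
    show "\<exists>U\<in>?A. \<forall>X\<in>C. X \<subseteq> U"
    proof (cases "C = {}")
      case True
      then show ?thesis using assms by auto
    next
      case False
      have "\<not> \<Union>C \<turnstile> c"
      proof
        assume "\<Union>C \<turnstile> c"
        then obtain G0 where G0: "G0 \<subseteq> \<Union>C" "finite G0" "G0 \<turnstile> c"
          using derivable_finite_subset by blast
        have "subset.chain ?A C" using C by (simp add: chains_alt_def)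
        then obtain B where "B \<in> C" "G0 \<subseteq> B"
          using finite_subset_Union_chain[OF G0(2) G0(1) False] by blast
        then show False using G0(3) derivable_mono C unfolding chains_def by blast
      qed
      moreover have "G \<subseteq> \<Union>C" using False C unfolding chains_def by blast
      ultimately show ?thesis by blast
    qed
  qed
  then obtain M where M: "M \<in> ?A" and max: "\<forall>X\<in>?A. M \<subseteq> X \<longrightarrow> X = M"
    by (rule Zorn_Lemma2[THEN bexE])
  have insert_derives: "insert a M \<turnstile> c" if "a \<notin> M" for a
    using max M that by (metis (no_types, lifting) insertI1 mem_Collect_eq subset_insertI subset_trans)
  have "is_theory L M"
    unfolding is_theory_def using insert_derives derives_cut M by blast
  moreover have "Bot \<notin> M" using M derives_BotE derivable.hyp by blast
  moreover have "a \<in> M \<or> b \<in> M" if "Or a b \<in> M" for a b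
    using insert_derives derives_OrE[OF derivable.hyp[OF that]] M by blast
  moreover have "c \<notin> M" using M derivable.hyp by blast
  ultimately show ?thesis using M that unfolding prime_theory_def by blast
qed

lemma prime_theory_Or_iff: "prime_theory L T \<Longrightarrow> Or a b \<in> T \<longleftrightarrow> a \<in> T \<or> b \<in> T"
  unfolding prime_theory_def is_theory_def by (meson derives_OrI1 derives_OrI2 derivable.hyp)

lemma prime_theory_Imp_iff:
  assumes "prime_theory L T"
  shows "Imp a b \<in> T \<longleftrightarrow> (\<forall>U. prime_theory L U \<longrightarrow> T \<subseteq> U \<longrightarrow> a \<in> U \<longrightarrow> b \<in> U)"
proof
  show "Imp a b \<in> T \<Longrightarrow> \<forall>U. prime_theory L U \<longrightarrow> T \<subseteq> U \<longrightarrow> a \<in> U \<longrightarrow> b \<in> U"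
    unfolding prime_theory_def by (meson subsetD theory_mp)
next
  assume extensions: "\<forall>U. prime_theory L U \<longrightarrow> T \<subseteq> U \<longrightarrow> a \<in> U \<longrightarrow> b \<in> U"
  show "Imp a b \<in> T"
  proof (rule ccontr)
    assume "Imp a b \<notin> T"
    then have "\<not> insert a T \<turnstile> b"
      using assms deduction unfolding prime_theory_def is_theory_def by blast
    then show False using extensions by (metis lindenbaum insert_subset)
  qed
qed

end

section \<open>Theories of conditional logics\<close>

definition inst3 :: "form \<Rightarrow> form \<Rightarrow> form \<Rightarrow> nat \<Rightarrow> form" where
  "inst3 a b c n = (if n = 0 then a else if n = 1 then b else c)"

definition consequents :: "form set \<Rightarrow> form \<Rightarrow> form set" where
  "consequents T a = {b. Cond a b \<in> T}"

locale ick =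
  fixes G :: "form set"

sublocale ick \<subseteq> ipc_extension "ICK_plus G"
  by unfold_locales (auto intro: ICK_plus.ipc ICK_plus.mp)

context ick
begin

lemma ICK_Imp_self: "Imp a a \<in> ICK_plus G"
  by (rule ICK_plus.ipc[OF IPC_Imp_self])

lemma ICK_Cond_And: "Iff (Cond a (And b c)) (And (Cond a b) (Cond a c)) \<in> ICK_plus G"
  using ICK_plus.us[OF ICK_plus.cm, of "inst3 a b c"] by (simp add: inst3_def Iff_def)

lemma ICK_Cond_Top: "Iff (Cond a Top) Top \<in> ICK_plus G"
  using ICK_plus.us[OF ICK_plus.cn, of "inst3 a a a"] by (simp add: inst3_def Iff_def Top_def)

lemma theory_Cond_of_logic:
  assumes T: "is_theory (ICK_plus G) T" and b: "b \<in> ICK_plus G"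
  shows "Cond a b \<in> T"
proof -
  have "derivable (ICK_plus G) {b} Top" "derivable (ICK_plus G) {Top} b"
    using b ICK_Imp_self unfolding Top_def by (auto intro: derivable.logic)
  then have "Iff b Top \<in> ICK_plus G"
    unfolding Iff_def derives_empty_iff[symmetric] by (blast intro: derives_AndI deduction)
  then have "Iff (Cond a b) (Cond a Top) \<in> ICK_plus G"
    by (rule ICK_plus.congR)
  moreover have "Cond a Top \<in> T"
    using theory_Iff[OF T ICK_Cond_Top] theory_logic[OF T] ICK_Imp_self
    unfolding Top_def by blast
  ultimately show ?thesis using theory_Iff[OF T] by blast
qed

lemma theory_Cond_mono:
  assumes T: "is_theory (ICK_plus G) T" and bc: "Imp b c \<in> ICK_plus G" and ab: "Cond a b \<in> T"
  shows "Cond a c \<in> T"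
proof -
  have "derivable (ICK_plus G) {b} (And b c)"
    using bc by (blast intro: derives_AndI derivable.hyp derivable.mp derivable.logic)
  moreover have "derivable (ICK_plus G) {And b c} b"
    by (blast intro: derives_AndD1 derivable.hyp)
  ultimately have "Iff b (And b c) \<in> ICK_plus G"
    unfolding Iff_def derives_empty_iff[symmetric] by (blast intro: derives_AndI deduction)
  then have "Cond a (And b c) \<in> T"
    using ab theory_Iff[OF T ICK_plus.congR] by blast
  then show ?thesis using theory_Iff[OF T ICK_Cond_And] theory_And_iff[OF T] by blast
qed

lemma theory_Cond_And:
  "is_theory (ICK_plus G) T \<Longrightarrow> Cond a b \<in> T \<Longrightarrow> Cond a c \<in> T \<Longrightarrow> Cond a (And b c) \<in> T"
  using theory_Iff[OF _ ICK_Cond_And] theory_And_iff by blast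

lemma theory_consequents:
  assumes T: "is_theory (ICK_plus G) T"
  shows "is_theory (ICK_plus G) (consequents T a)"
  unfolding is_theory_def
proof (intro allI impI)
  fix b assume "derivable (ICK_plus G) (consequents T a) b"
  then show "b \<in> consequents T a"
  proof (induction rule: derivable.induct)
    case (logic b)
    then show ?case using theory_Cond_of_logic[OF T] unfolding consequents_def by blast
  next
    case (hyp b)
    then show ?case .
  next
    case (mp b c)
    have "Imp (And (Imp b c) b) c \<in> ICK_plus G"
      unfolding derives_empty_iff[symmetric]
      by (rule deduction)
        (blast intro: derivable.hyp derivable.mp[OF derives_AndD1] derives_AndD2)
    moreover have "Cond a (And (Imp b c) b) \<in> T"
      using mp.IH theory_Cond_And[OF T] unfolding consequents_def by blast
    ultimately show ?case using theory_Cond_mono[OF T] unfolding consequents_def by blast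
  qed
qed

end

interpretation iCB: ick iCB_axioms
  rewrites "ICK_plus iCB_axioms = iCB"
  by (simp add: iCB_def)

lemma iCB_axiom_instance: "\<phi> \<in> iCB_axioms \<Longrightarrow> subst (inst3 a b c) \<phi> \<in> iCB"
  unfolding iCB_def by (blast intro: ICK_plus.gam ICK_plus.us)

lemma iCB_Cond_refl: "Cond a a \<in> iCB"
  using iCB_axiom_instance[of "Cond P P" a a a]
  by (simp add: iCB_axioms_def iCC_axioms_def inst3_def)

lemma iCB_Cond_reciprocity: "Imp (And (Cond a b) (And (Cond b a) (Cond a c))) (Cond b c) \<in> iCB"
  using iCB_axiom_instance[of "Imp (And (Cond P Q) (And (Cond Q P) (Cond P Rr))) (Cond Q Rr)" a b c]
  by (simp add: iCB_axioms_def iCC_axioms_def inst3_def)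

lemma iCB_Cond_iterate: "Imp (Cond a b) (Cond a (Cond a b)) \<in> iCB"
  using iCB_axiom_instance[of "Imp (Cond P Q) (Cond P (Cond P Q))" a b b]
  by (simp add: iCB_axioms_def iCC_axioms_def inst3_def)

section \<open>Semantics on conditional frames and soundness\<close>

abbreviation truth_set :: "('w, 'm) cframe_scheme \<Rightarrow> (nat \<Rightarrow> 'w set) \<Rightarrow> form \<Rightarrow> 'w set" where
  "truth_set F V \<phi> \<equiv> {z \<in> carrier F. sat F V z \<phi>}"

lemma up_subset_upset: "upset F c \<Longrightarrow> S \<subseteq> c \<Longrightarrow> up F S \<subseteq> c"
  unfolding upset_def up_def by blast

lemma cond_frameI:
  assumes "carrier F \<noteq> {}"
    and "\<And>x y. leq F x y \<Longrightarrow> x \<in> carrier F \<and> y \<in> carrier F"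
    and "\<And>x. x \<in> carrier F \<Longrightarrow> leq F x x"
    and "\<And>x y z. leq F x y \<Longrightarrow> leq F y z \<Longrightarrow> leq F x z"
    and "\<And>a x y. upset F a \<Longrightarrow> rel F a x y \<Longrightarrow> x \<in> carrier F \<and> y \<in> carrier F"
    and "\<And>a x y z. upset F a \<Longrightarrow> leq F x y \<Longrightarrow> rel F a y z \<Longrightarrow> \<exists>w. rel F a x w \<and> leq F w z"
  shows "cond_frame F"
  unfolding cond_frame_def using assms by simp

lemma validD: "valid F \<phi> \<Longrightarrow> \<forall>n. upset F (V n) \<Longrightarrow> x \<in> carrier F \<Longrightarrow> sat F V x \<phi>"
  unfolding valid_def by blast

context
  fixes F :: "('w, 'm) cframe_scheme"
  assumes F: "cond_frame F"
begin

lemma cond_frame_leq_carrier: "leq F x y \<Longrightarrow> x \<in> carrier F \<and> y \<in> carrier F"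
  using F unfolding cond_frame_def by simp

lemma cond_frame_leq_refl: "x \<in> carrier F \<Longrightarrow> leq F x x"
  using F unfolding cond_frame_def by simp

lemma cond_frame_leq_trans: "leq F x y \<Longrightarrow> leq F y z \<Longrightarrow> leq F x z"
  using F unfolding cond_frame_def by simp

lemma cond_frame_rel_carrier: "upset F a \<Longrightarrow> rel F a x y \<Longrightarrow> x \<in> carrier F \<and> y \<in> carrier F"
  using F unfolding cond_frame_def by simp

lemma cond_frame_rel_back:
  "upset F a \<Longrightarrow> leq F x y \<Longrightarrow> rel F a y z \<Longrightarrow> \<exists>w. rel F a x w \<and> leq F w z"
  using F unfolding cond_frame_def by simp

lemma img_subset_up_img: "upset F a \<Longrightarrow> img F a x \<subseteq> up F (img F a x)"
  unfolding img_def up_def using cond_frame_rel_carrier cond_frame_leq_refl by blast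

lemma img_subset_if_up_img_eq:
  assumes "upset F b" "upset F c"
    and "up F (img F a x) = up F (img F b x)" and "img F a x \<subseteq> c"
  shows "img F b x \<subseteq> c"
  using assms img_subset_up_img[of b x] up_subset_upset[of F c] by blast

context
  fixes V :: "nat \<Rightarrow> 'w set"
  assumes V: "\<forall>n. upset F (V n)"
begin

lemma persistence: "leq F x y \<Longrightarrow> sat F V x \<phi> \<Longrightarrow> sat F V y \<phi>"
proof (induction \<phi> arbitrary: x y)
  case (Atom n)
  then show ?case
    using V[THEN spec, of n] cond_frame_leq_carrier[OF Atom.prems(1)] unfolding upset_def by simp
next
  case (Imp a b)
  show ?case unfolding sat.simps
  proof (intro ballI impI)
    fix z assume "z \<in> carrier F" "leq F y z" "sat F V z a"
    then show "sat F V z b"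
      using Imp.prems cond_frame_leq_trans[OF Imp.prems(1)] by simp
  qed
next
  case (Cond a b)
  have "upset F (truth_set F V a)"
    unfolding upset_def using Cond.IH(1) by blast
  show ?case unfolding sat.simps
  proof (intro allI impI)
    fix z assume "rel F (truth_set F V a) y z"
    then obtain w where "rel F (truth_set F V a) x w" "leq F w z"
      using cond_frame_rel_back[OF \<open>upset F (truth_set F V a)\<close> Cond.prems(1)] by blast
    then show "sat F V z b" using Cond.prems(2) Cond.IH(2) by simp
  qed
qed auto

lemma upset_truth_set: "upset F (truth_set F V \<phi>)"
  unfolding upset_def using persistence by blast

lemma sat_Cond_iff: "sat F V x (Cond a b) \<longleftrightarrow> img F (truth_set F V a) x \<subseteq> truth_set F V b"
  using cond_frame_rel_carrier[OF upset_truth_set[of a]] unfolding img_def sat.simps by blast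

lemma sat_subst:
  "x \<in> carrier F \<Longrightarrow> sat F V x (subst s \<phi>) \<longleftrightarrow> sat F (\<lambda>n. truth_set F V (s n)) x \<phi>"
proof (induction \<phi> arbitrary: x)
  case (Cond a b)
  let ?V' = "\<lambda>n. truth_set F V (s n)"
  have eq: "truth_set F V (subst s a) = truth_set F ?V' a"
    using Cond.IH(1) by blast
  have "rel F (truth_set F ?V' a) x y \<Longrightarrow> y \<in> carrier F" for y
    using cond_frame_rel_carrier[OF upset_truth_set[of "subst s a"]] unfolding eq by blast
  then show ?case
    using Cond.IH(2) unfolding subst.simps sat.simps eq by blast
qed simp_all

end

lemma valid_subst: "valid F \<phi> \<Longrightarrow> valid F (subst s \<phi>)"
  unfolding valid_def using sat_subst upset_truth_set by simp

lemma valid_mp: "valid F (Imp a b) \<Longrightarrow> valid F a \<Longrightarrow> valid F b"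
  unfolding valid_def using cond_frame_leq_refl by auto

lemma valid_ImpI:
  "(\<And>V x. \<forall>n. upset F (V n) \<Longrightarrow> x \<in> carrier F \<Longrightarrow> sat F V x a \<Longrightarrow> sat F V x b)
    \<Longrightarrow> valid F (Imp a b)"
  unfolding valid_def by simp

lemma valid_IffI:
  "(\<And>V x. \<forall>n. upset F (V n) \<Longrightarrow> x \<in> carrier F \<Longrightarrow> sat F V x a \<longleftrightarrow> sat F V x b)
    \<Longrightarrow> valid F (Iff a b)"
  unfolding valid_def Iff_def by simp

lemma valid_IffD:
  assumes "valid F (Iff a b)" and "\<forall>n. upset F (V n)"
  shows "truth_set F V a = truth_set F V b"
proof -
  have "sat F V x (Iff a b)" if "x \<in> carrier F" for x
    using assms that unfolding valid_def by blast
  then show ?thesis unfolding Iff_def using cond_frame_leq_refl by auto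
qed

lemma valid_IPC: "\<phi> \<in> IPC \<Longrightarrow> valid F \<phi>"
proof (induction rule: IPC.induct)
  case (k a b)
  show ?case unfolding valid_def by (auto intro: persistence)
next
  case (s a b c)
  show ?case
    unfolding valid_def sat.simps by (meson cond_frame_leq_refl cond_frame_leq_trans)
next
  case (c3 a b)
  show ?case unfolding valid_def by (auto intro: persistence)
next
  case (d3 a c b)
  show ?case unfolding valid_def by (auto dest: cond_frame_leq_trans)
next
  case (mp a b)
  then show ?case using valid_mp by blast
qed (simp_all add: valid_def)

lemma valid_ICK_plus: "\<psi> \<in> ICK_plus G \<Longrightarrow> \<forall>\<phi>\<in>G. valid F \<phi> \<Longrightarrow> valid F \<psi>"
proof (induction rule: ICK_plus.induct)
  case (ipc a)
  then show ?case by (simp add: valid_IPC)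
next
  case cm
  show ?case by (rule valid_IffI) auto
next
  case cn
  show ?case by (rule valid_IffI) (simp add: Top_def)
next
  case (us a s)
  then show ?case using valid_subst by blast
next
  case (mp a b)
  then show ?case using valid_mp by blast
next
  case (congL a b c)
  then have ab: "valid F (Iff a b)" by blast
  show ?case
  proof (rule valid_IffI)
    fix V :: "nat \<Rightarrow> 'w set" and x assume "\<forall>n. upset F (V n)"
    then show "sat F V x (Cond a c) \<longleftrightarrow> sat F V x (Cond b c)"
      using valid_IffD[OF ab] by simp
  qed
next
  case (congR a b c)
  then have ab: "valid F (Iff a b)" by blast
  show ?case
  proof (rule valid_IffI)
    fix V :: "nat \<Rightarrow> 'w set" and x assume "\<forall>n. upset F (V n)"
    then show "sat F V x (Cond c a) \<longleftrightarrow> sat F V x (Cond c b)"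
      using valid_IffD[OF ab] sat_Cond_iff by simp
  qed
qed simp

end

lemma cautious_cond_frame: "cautious F \<Longrightarrow> cond_frame F"
  unfolding cautious_def by (rule conjunct1)

lemma cautious_img_subset:
  assumes "cautious F" "x \<in> carrier F" "upset F a"
  shows "img F a x \<subseteq> a"
  using assms(1)[unfolded cautious_def, THEN conjunct2, rule_format, OF assms(2,3,3)] ..

lemma cautious_up_img_eq:
  assumes "cautious F" "x \<in> carrier F" "upset F a" "upset F b"
    and "img F a x \<subseteq> b" "b \<subseteq> a"
  shows "up F (img F a x) = up F (img F b x)"
  using assms(1)[unfolded cautious_def, THEN conjunct2, rule_format, OF assms(2-4)] assms(5,6)
  by blast

lemma iCB_frameI:
  assumes "cond_frame F"
    and "\<And>x a. x \<in> carrier F \<Longrightarrow> upset F a \<Longrightarrow> img F a x \<subseteq> a"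
    and "\<And>x a b. x \<in> carrier F \<Longrightarrow> upset F a \<Longrightarrow> upset F b
      \<Longrightarrow> img F a x \<subseteq> b \<Longrightarrow> img F b x \<subseteq> a \<Longrightarrow> up F (img F a x) = up F (img F b x)"
    and "\<And>a x y z. upset F a \<Longrightarrow> rel F a x y \<Longrightarrow> rel F a y z \<Longrightarrow> \<exists>w. rel F a x w \<and> leq F w z"
  shows "iCB_frame F"
proof -
  have "cautious F"
    unfolding cautious_def
  proof (intro conjI ballI allI impI)
    fix x a b assume x: "x \<in> carrier F" and a: "upset F a" and b: "upset F b"
    show "img F a x \<subseteq> a" by (rule assms(2)[OF x a])
    assume "img F a x \<subseteq> b \<and> b \<subseteq> a"
    moreover have "img F b x \<subseteq> b" by (rule assms(2)[OF x b])
    ultimately show "up F (img F a x) = up F (img F b x)"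
      using assms(3)[OF x a b] by blast
  qed (rule assms(1))
  then show ?thesis
    unfolding iCB_frame_def using assms(3,4) by (intro conjI ballI allI impI) blast+
qed

lemma iCB_frame_cautious: "iCB_frame F \<Longrightarrow> cautious F"
  unfolding iCB_frame_def by (rule conjunct1)

lemma iCB_frame_up_img_eq:
  assumes "iCB_frame F" "x \<in> carrier F" "upset F a" "upset F b"
    and "img F a x \<subseteq> b" "img F b x \<subseteq> a"
  shows "up F (img F a x) = up F (img F b x)"
  using assms(1)[unfolded iCB_frame_def, THEN conjunct2, THEN conjunct1, rule_format, OF assms(2-6)] .

lemma iCB_frame_rel_rel:
  assumes "iCB_frame F" "upset F a" "rel F a x y" "rel F a y z"
  shows "\<exists>w. rel F a x w \<and> leq F w z"
  using assms(1)[unfolded iCB_frame_def, THEN conjunct2, THEN conjunct2, rule_format, OF assms(2-4)] .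

context
  fixes F :: "('w, 'm) cframe_scheme"
  assumes F: "cautious F"
begin

lemma valid_Cond_refl: "valid F (Cond P P)"
  unfolding valid_def
proof (intro allI impI ballI)
  fix V :: "nat \<Rightarrow> 'w set" and x
  assume V: "\<forall>n. upset F (V n)" and x: "x \<in> carrier F"
  show "sat F V x (Cond P P)"
    unfolding sat_Cond_iff[OF cautious_cond_frame[OF F] V]
    by (rule cautious_img_subset[OF F x upset_truth_set[OF cautious_cond_frame[OF F] V]])
qed

lemma up_img_And_eq:
  assumes V: "\<forall>n. upset F (V n)" and x: "x \<in> carrier F" and "sat F V x (Cond a b)"
  shows "up F (img F (truth_set F V a) x) = up F (img F (truth_set F V (And a b)) x)"
proof (rule cautious_up_img_eq[OF F x upset_truth_set upset_truth_set])
  show "img F (truth_set F V a) x \<subseteq> truth_set F V (And a b)"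
    using assms(3) cautious_img_subset[OF F x upset_truth_set[OF cautious_cond_frame[OF F] V]]
    unfolding sat_Cond_iff[OF cautious_cond_frame[OF F] V] by auto
qed (use V cautious_cond_frame[OF F] in auto)

lemma valid_cumulative_transitivity: "valid F (Imp (And (Cond P Q) (Cond (And P Q) Rr)) (Cond P Rr))"
proof (rule valid_ImpI[OF cautious_cond_frame[OF F]])
  fix V :: "nat \<Rightarrow> 'w set" and x
  assume V: "\<forall>n. upset F (V n)" and x: "x \<in> carrier F"
    and PQ_R: "sat F V x (And (Cond P Q) (Cond (And P Q) Rr))"
  note sat_Cond = sat_Cond_iff[OF cautious_cond_frame[OF F] V]
  note upset = upset_truth_set[OF cautious_cond_frame[OF F] V]
  have "up F (img F (truth_set F V (And P Q)) x) = up F (img F (truth_set F V P) x)"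
    using up_img_And_eq[OF V x PQ_R[unfolded sat.simps(3), THEN conjunct1]] by (rule sym)
  moreover have "img F (truth_set F V (And P Q)) x \<subseteq> truth_set F V Rr"
    using PQ_R unfolding sat.simps(3) sat_Cond by blast
  ultimately have "img F (truth_set F V P) x \<subseteq> truth_set F V Rr"
    by (rule img_subset_if_up_img_eq[OF cautious_cond_frame[OF F] upset upset])
  then show "sat F V x (Cond P Rr)" unfolding sat_Cond .
qed

lemma valid_cautious_monotonicity: "valid F (Imp (And (Cond P Q) (Cond P Rr)) (Cond (And P Q) Rr))"
proof (rule valid_ImpI[OF cautious_cond_frame[OF F]])
  fix V :: "nat \<Rightarrow> 'w set" and x
  assume V: "\<forall>n. upset F (V n)" and x: "x \<in> carrier F"
    and PQ_PR: "sat F V x (And (Cond P Q) (Cond P Rr))"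
  note sat_Cond = sat_Cond_iff[OF cautious_cond_frame[OF F] V]
  note upset = upset_truth_set[OF cautious_cond_frame[OF F] V]
  have "up F (img F (truth_set F V P) x) = up F (img F (truth_set F V (And P Q)) x)"
    by (rule up_img_And_eq[OF V x PQ_PR[unfolded sat.simps(3), THEN conjunct1]])
  moreover have "img F (truth_set F V P) x \<subseteq> truth_set F V Rr"
    using PQ_PR unfolding sat.simps(3) sat_Cond by blast
  ultimately have "img F (truth_set F V (And P Q)) x \<subseteq> truth_set F V Rr"
    by (rule img_subset_if_up_img_eq[OF cautious_cond_frame[OF F] upset upset])
  then show "sat F V x (Cond (And P Q) Rr)" unfolding sat_Cond .
qed

end

context
  fixes F :: "('w, 'm) cframe_scheme"
  assumes F: "iCB_frame F"
begin

lemma valid_reciprocity: "valid F (Imp (And (Cond P Q) (And (Cond Q P) (Cond P Rr))) (Cond Q Rr))"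
proof (rule valid_ImpI[OF cautious_cond_frame[OF iCB_frame_cautious[OF F]]])
  fix V :: "nat \<Rightarrow> 'w set" and x
  assume V: "\<forall>n. upset F (V n)" and x: "x \<in> carrier F"
    and "sat F V x (And (Cond P Q) (And (Cond Q P) (Cond P Rr)))"
  let ?A = "truth_set F V P" and ?B = "truth_set F V Q"
  note cf = cautious_cond_frame[OF iCB_frame_cautious[OF F]]
  note sat_Cond = sat_Cond_iff[OF cf V]
  note upset = upset_truth_set[OF cf V]
  have AB: "img F ?A x \<subseteq> ?B" and BA: "img F ?B x \<subseteq> ?A"
    and AR: "img F ?A x \<subseteq> truth_set F V Rr"
    using \<open>sat F V x _\<close> unfolding sat.simps(3) sat_Cond by blast+
  have "up F (img F ?A x) = up F (img F ?B x)"
    by (rule iCB_frame_up_img_eq[OF F x upset upset AB BA])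
  then have "img F ?B x \<subseteq> truth_set F V Rr"
    using AR by (rule img_subset_if_up_img_eq[OF cf upset upset])
  then show "sat F V x (Cond Q Rr)" unfolding sat_Cond .
qed

lemma valid_Cond_iterate: "valid F (Imp (Cond P Q) (Cond P (Cond P Q)))"
proof (rule valid_ImpI[OF cautious_cond_frame[OF iCB_frame_cautious[OF F]]])
  fix V :: "nat \<Rightarrow> 'w set" and x
  assume V: "\<forall>n. upset F (V n)" and x: "x \<in> carrier F" and "sat F V x (Cond P Q)"
  note cf = cautious_cond_frame[OF iCB_frame_cautious[OF F]]
  have "sat F V z Q" if xyz: "rel F (truth_set F V P) x y" "rel F (truth_set F V P) y z" for y z
  proof -
    obtain w where "rel F (truth_set F V P) x w" "leq F w z"
      using iCB_frame_rel_rel[OF F upset_truth_set[OF cf V] xyz] by blast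
    then show ?thesis
      using \<open>sat F V x (Cond P Q)\<close> persistence[OF cf V \<open>leq F w z\<close>]
      unfolding sat.simps(6) by blast
  qed
  then show "sat F V x (Cond P (Cond P Q))" by simp
qed

lemma iCB_frame_valid_axioms: "\<phi> \<in> iCB_axioms \<Longrightarrow> valid F \<phi>"
  using valid_Cond_refl valid_cumulative_transitivity valid_cautious_monotonicity
    valid_reciprocity valid_Cond_iterate iCB_frame_cautious[OF F]
  unfolding iCB_axioms_def iCC_axioms_def by blast

theorem iCB_sound: "\<phi> \<in> iCB \<Longrightarrow> valid F \<phi>"
  unfolding iCB_def
  using valid_ICK_plus[OF cautious_cond_frame[OF iCB_frame_cautious[OF F]]] iCB_frame_valid_axioms
  by blast

end

section \<open>The canonical frame and completeness\<close>

text \<open>Worlds must have type \<^typ>\<open>form set set\<close>, so a prime theory \<open>T\<close> is represented by the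
  world \<open>{T}\<close>, whose theory is recovered as \<open>\<Union>w\<close>.\<close>

definition canon_worlds :: "form set set set" where
  "canon_worlds = {{T} | T. prime_theory iCB T}"

definition canon_ext :: "form \<Rightarrow> form set set set" where
  "canon_ext p = {w \<in> canon_worlds. p \<in> \<Union>w}"

definition canon_succ :: "form \<Rightarrow> form set set \<Rightarrow> form set set set" where
  "canon_succ p w = {v \<in> canon_worlds. consequents (\<Union>w) p \<subseteq> \<Union>v}"

definition canon_witness :: "form set set set \<Rightarrow> form set set \<Rightarrow> form \<Rightarrow> bool" where
  "canon_witness a w p \<longleftrightarrow> canon_succ p w \<subseteq> a \<and> a \<subseteq> canon_ext p"

text \<open>The canonical \<open>R\<^sub>a[w]\<close>: \<open>canon_succ p w\<close> whenever \<open>p\<close> witnesses that \<open>a\<close> is squeezed between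
  \<open>canon_succ p w\<close> and \<open>canon_ext p\<close> (all witnesses give the same set, by reciprocity),
  and \<open>a\<close> itself otherwise.\<close>

definition canon_img :: "form set set set \<Rightarrow> form set set \<Rightarrow> form set set set" where
  "canon_img a w =
     (if \<exists>p. canon_witness a w p then canon_succ (SOME p. canon_witness a w p) w else a)"

definition canon_frame :: "form set set cframe" where
  "canon_frame =
     \<lparr>carrier = canon_worlds,
      leq = (\<lambda>w v. w \<in> canon_worlds \<and> v \<in> canon_worlds \<and> \<Union>w \<subseteq> \<Union>v),
      rel = (\<lambda>a w v. w \<in> canon_worlds \<and> v \<in> canon_img a w)\<rparr>"

lemma singleton_in_canon_worlds_iff: "{T} \<in> canon_worlds \<longleftrightarrow> prime_theory iCB T"
  unfolding canon_worlds_def by auto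

lemma ball_canon_worlds: "(\<forall>v\<in>canon_worlds. A (\<Union>v)) \<longleftrightarrow> (\<forall>T. prime_theory iCB T \<longrightarrow> A T)"
proof (intro iffI allI impI)
  fix T assume "\<forall>v\<in>canon_worlds. A (\<Union>v)" and "prime_theory iCB T"
  then have "A (\<Union>{T})" using singleton_in_canon_worlds_iff by blast
  then show "A T" by simp
qed (auto simp: canon_worlds_def)

lemma canon_worlds_prime: "w \<in> canon_worlds \<Longrightarrow> prime_theory iCB (\<Union>w)"
  unfolding canon_worlds_def by auto

lemma canon_worlds_theory: "w \<in> canon_worlds \<Longrightarrow> is_theory iCB (\<Union>w)"
  using canon_worlds_prime unfolding prime_theory_def by blast

lemma canon_succ_subset_ext_iff:
  assumes w: "w \<in> canon_worlds"
  shows "canon_succ p w \<subseteq> canon_ext q \<longleftrightarrow> Cond p q \<in> \<Union>w"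
proof
  assume "Cond p q \<in> \<Union>w"
  then show "canon_succ p w \<subseteq> canon_ext q"
    unfolding canon_succ_def canon_ext_def consequents_def by auto
next
  assume succ_ext: "canon_succ p w \<subseteq> canon_ext q"
  show "Cond p q \<in> \<Union>w"
  proof (rule ccontr)
    assume "Cond p q \<notin> \<Union>w"
    then have "\<not> derivable iCB (consequents (\<Union>w) p) q"
      using iCB.theory_consequents[OF canon_worlds_theory[OF w]]
      unfolding is_theory_def consequents_def by blast
    then obtain T where "consequents (\<Union>w) p \<subseteq> T" "prime_theory iCB T" "q \<notin> T"
      by (rule iCB.lindenbaum)
    then have "{T} \<in> canon_succ p w" "{T} \<notin> canon_ext q"
      unfolding canon_succ_def canon_ext_def by (auto simp: singleton_in_canon_worlds_iff)
    then show False using succ_ext by blast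
  qed
qed

lemma canon_succ_subset_ext: "w \<in> canon_worlds \<Longrightarrow> canon_succ p w \<subseteq> canon_ext p"
  unfolding canon_succ_subset_ext_iff
  by (rule iCB.theory_logic[OF canon_worlds_theory iCB_Cond_refl])

lemma canon_succ_eq:
  assumes w: "w \<in> canon_worlds"
    and "canon_succ p w \<subseteq> canon_ext q" and "canon_succ q w \<subseteq> canon_ext p"
  shows "canon_succ p w = canon_succ q w"
proof -
  have T: "is_theory iCB (\<Union>w)" by (rule canon_worlds_theory[OF w])
  have pq: "Cond p q \<in> \<Union>w" and qp: "Cond q p \<in> \<Union>w"
    using assms canon_succ_subset_ext_iff[OF w] by auto
  have swap: "Cond b c \<in> \<Union>w" if "Cond a b \<in> \<Union>w" "Cond b a \<in> \<Union>w" "Cond a c \<in> \<Union>w" for a b c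
  proof -
    have "And (Cond a b) (And (Cond b a) (Cond a c)) \<in> \<Union>w"
      using that iCB.theory_And_iff[OF T] by simp
    then show ?thesis by (rule iCB.theory_logic_mp[OF T iCB_Cond_reciprocity])
  qed
  have "consequents (\<Union>w) p = consequents (\<Union>w) q"
    using swap[OF pq qp] swap[OF qp pq] unfolding consequents_def by blast
  then show ?thesis unfolding canon_succ_def by simp
qed

lemma canon_succ_antimono: "\<Union>w \<subseteq> \<Union>w' \<Longrightarrow> canon_succ p w' \<subseteq> canon_succ p w"
  unfolding canon_succ_def consequents_def by auto

lemma canon_succ_trans:
  assumes w: "w \<in> canon_worlds" and v: "v \<in> canon_succ p w"
  shows "canon_succ p v \<subseteq> canon_succ p w"
proof -
  have "Cond p (Cond p c) \<in> \<Union>w" if "Cond p c \<in> \<Union>w" for c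
    using iCB.theory_logic_mp[OF canon_worlds_theory[OF w] iCB_Cond_iterate that] .
  then have "consequents (\<Union>w) p \<subseteq> consequents (\<Union>v) p"
    using v unfolding canon_succ_def consequents_def by blast
  then show ?thesis unfolding canon_succ_def by blast
qed

lemma canon_img_witness:
  assumes w: "w \<in> canon_worlds" and p: "canon_witness a w p"
  shows "canon_img a w = canon_succ p w"
proof -
  let ?q = "SOME q. canon_witness a w q"
  have q: "canon_witness a w ?q" using p by (rule someI)
  have "canon_succ ?q w \<subseteq> canon_ext p" "canon_succ p w \<subseteq> canon_ext ?q"
    using p q unfolding canon_witness_def by blast+
  then have "canon_succ ?q w = canon_succ p w" by (rule canon_succ_eq[OF w])
  then show ?thesis using p unfolding canon_img_def by auto
qed

lemma canon_img_no_witness: "\<not> (\<exists>p. canon_witness a w p) \<Longrightarrow> canon_img a w = a"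
  unfolding canon_img_def by (rule if_not_P)

lemma canon_img_subset: "canon_img a w \<subseteq> a"
proof (cases "\<exists>p. canon_witness a w p")
  case True
  then have "canon_witness a w (SOME p. canon_witness a w p)" by (rule someI_ex)
  then show ?thesis using True unfolding canon_img_def canon_witness_def by simp
next
  case False
  then show ?thesis by (simp add: canon_img_no_witness)
qed

lemma canon_img_ext:
  assumes w: "w \<in> canon_worlds"
  shows "canon_img (canon_ext p) w = canon_succ p w"
proof -
  have "canon_witness (canon_ext p) w p"
    unfolding canon_witness_def using canon_succ_subset_ext[OF w] by simp
  then show ?thesis by (rule canon_img_witness[OF w])
qed

lemma canon_img_antimono:
  assumes w: "w \<in> canon_worlds" and w': "w' \<in> canon_worlds" and ww': "\<Union>w \<subseteq> \<Union>w'"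
  shows "canon_img a w' \<subseteq> canon_img a w"
proof (cases "\<exists>p. canon_witness a w p")
  case True
  then obtain p where p: "canon_witness a w p" ..
  then have "canon_witness a w' p"
    using canon_succ_antimono[OF ww'] unfolding canon_witness_def by blast
  then show ?thesis
    using canon_img_witness[OF w p] canon_img_witness[OF w'] canon_succ_antimono[OF ww'] by simp
next
  case False
  then show ?thesis using canon_img_no_witness canon_img_subset by simp
qed

lemma canon_img_trans:
  assumes w: "w \<in> canon_worlds" and v: "v \<in> canon_img a w"
  shows "canon_img a v \<subseteq> canon_img a w"
proof (cases "\<exists>p. canon_witness a w p")
  case True
  then obtain p where p: "canon_witness a w p" ..
  have "v \<in> canon_succ p w" using v canon_img_witness[OF w p] by simp
  then have "v \<in> canon_worlds" and "canon_succ p v \<subseteq> canon_succ p w"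
    using canon_succ_trans[OF w] unfolding canon_succ_def by auto
  moreover from this have "canon_witness a v p" using p unfolding canon_witness_def by blast
  ultimately show ?thesis using canon_img_witness[OF w p] canon_img_witness by simp
next
  case False
  then show ?thesis using canon_img_no_witness canon_img_subset by simp
qed

lemma canon_img_reciprocal_witness:
  assumes w: "w \<in> canon_worlds" and p: "canon_witness a w p"
    and ab: "canon_img a w \<subseteq> b" and ba: "canon_img b w \<subseteq> a"
  shows "canon_img a w = canon_img b w"
proof (cases "\<exists>q. canon_witness b w q")
  case True
  then obtain q where q: "canon_witness b w q" ..
  note img_a = canon_img_witness[OF w p] and img_b = canon_img_witness[OF w q]
  have "canon_succ p w \<subseteq> canon_ext q" "canon_succ q w \<subseteq> canon_ext p"
    using p q ab ba unfolding img_a img_b canon_witness_def by blast+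
  then show ?thesis unfolding img_a img_b by (rule canon_succ_eq[OF w])
next
  case False
  note img_a = canon_img_witness[OF w p] and img_b = canon_img_no_witness[OF False]
  have "canon_witness b w p"
    using p ab ba unfolding img_a img_b canon_witness_def by blast
  with False show ?thesis by blast
qed

lemma canon_img_reciprocal:
  assumes w: "w \<in> canon_worlds"
    and ab: "canon_img a w \<subseteq> b" and ba: "canon_img b w \<subseteq> a"
  shows "canon_img a w = canon_img b w"
proof -
  consider p where "canon_witness a w p" | q where "canon_witness b w q"
    | "\<not> (\<exists>p. canon_witness a w p)" "\<not> (\<exists>q. canon_witness b w q)"
    by blast
  then show ?thesis
  proof cases
    case 1
    then show ?thesis by (rule canon_img_reciprocal_witness[OF w _ ab ba])
  next
    case 2
    then have "canon_img b w = canon_img a w" by (rule canon_img_reciprocal_witness[OF w _ ba ab])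
    then show ?thesis ..
  next
    case 3
    then show ?thesis using ab ba canon_img_no_witness by auto
  qed
qed

lemma canon_frame_simps:
  "carrier canon_frame = canon_worlds"
  "leq canon_frame w v \<longleftrightarrow> w \<in> canon_worlds \<and> v \<in> canon_worlds \<and> \<Union>w \<subseteq> \<Union>v"
  "rel canon_frame a w v \<longleftrightarrow> w \<in> canon_worlds \<and> v \<in> canon_img a w"
  by (simp_all add: canon_frame_def)

lemma upset_canon_frame_subset: "upset canon_frame a \<Longrightarrow> a \<subseteq> canon_worlds"
  unfolding upset_def canon_frame_simps by (rule conjunct1)

lemma img_canon_frame: "w \<in> canon_worlds \<Longrightarrow> img canon_frame a w = canon_img a w"
  unfolding img_def canon_frame_simps by simp

lemma canon_rel_carrier:
  "upset canon_frame a \<Longrightarrow> rel canon_frame a x y \<Longrightarrow> x \<in> canon_worlds \<and> y \<in> canon_worlds"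
  using canon_img_subset upset_canon_frame_subset unfolding canon_frame_simps by blast

lemma canon_frame_cond_frame:
  assumes "canon_worlds \<noteq> {}"
  shows "cond_frame canon_frame"
proof (rule cond_frameI)
  show "carrier canon_frame \<noteq> {}" using assms by (simp add: canon_frame_simps)
next
  fix x y
  show "leq canon_frame x y \<Longrightarrow> x \<in> carrier canon_frame \<and> y \<in> carrier canon_frame"
    by (simp add: canon_frame_simps)
next
  fix x
  show "x \<in> carrier canon_frame \<Longrightarrow> leq canon_frame x x" by (simp add: canon_frame_simps)
next
  fix x y z
  show "leq canon_frame x y \<Longrightarrow> leq canon_frame y z \<Longrightarrow> leq canon_frame x z"
    unfolding canon_frame_simps by (meson subset_trans)
next
  fix a x y
  show "upset canon_frame a \<Longrightarrow> rel canon_frame a x y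
      \<Longrightarrow> x \<in> carrier canon_frame \<and> y \<in> carrier canon_frame"
    unfolding canon_frame_simps(1) by (rule canon_rel_carrier)
next
  fix a x y z
  assume a: "upset canon_frame a" and xy: "leq canon_frame x y" and yz: "rel canon_frame a y z"
  have "z \<in> canon_img a x"
    using xy yz canon_img_antimono unfolding canon_frame_simps by blast
  moreover have "x \<in> canon_worlds" "z \<in> canon_worlds"
    using canon_rel_carrier[OF a yz] xy unfolding canon_frame_simps by blast+
  ultimately have "rel canon_frame a x z" "leq canon_frame z z"
    unfolding canon_frame_simps by blast+
  then show "\<exists>w. rel canon_frame a x w \<and> leq canon_frame w z" by blast
qed

lemma canon_frame_iCB_frame:
  assumes "canon_worlds \<noteq> {}"
  shows "iCB_frame canon_frame"
proof (rule iCB_frameI)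
  show "cond_frame canon_frame" by (rule canon_frame_cond_frame[OF assms])
next
  fix x a assume "x \<in> carrier canon_frame"
  then show "img canon_frame a x \<subseteq> a"
    using canon_img_subset img_canon_frame unfolding canon_frame_simps by simp
next
  fix x a b assume "x \<in> carrier canon_frame"
    and ab: "img canon_frame a x \<subseteq> b" and ba: "img canon_frame b x \<subseteq> a"
  then have x: "x \<in> canon_worlds" by (simp add: canon_frame_simps)
  have "canon_img a x = canon_img b x"
    using ab ba unfolding img_canon_frame[OF x] by (rule canon_img_reciprocal[OF x])
  then show "up canon_frame (img canon_frame a x) = up canon_frame (img canon_frame b x)"
    unfolding img_canon_frame[OF x] by simp
next
  fix a x y z
  assume a: "upset canon_frame a" and xy: "rel canon_frame a x y" and yz: "rel canon_frame a y z"
  have "z \<in> canon_img a x"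
    using xy yz canon_img_trans unfolding canon_frame_simps by blast
  moreover have "x \<in> canon_worlds" "z \<in> canon_worlds"
    using canon_rel_carrier[OF a xy] canon_rel_carrier[OF a yz] by blast+
  ultimately have "rel canon_frame a x z" "leq canon_frame z z"
    unfolding canon_frame_simps by blast+
  then show "\<exists>w. rel canon_frame a x w \<and> leq canon_frame w z" by blast
qed

lemma upset_canon_ext: "upset canon_frame (canon_ext p)"
  unfolding upset_def canon_frame_simps canon_ext_def by blast

lemma canon_truth:
  "w \<in> canon_worlds \<Longrightarrow> sat canon_frame (\<lambda>n. canon_ext (Atom n)) w \<phi> \<longleftrightarrow> \<phi> \<in> \<Union>w"
proof (induction \<phi> arbitrary: w)
  case (Atom n)
  then show ?case by (simp add: canon_ext_def)
next
  case Bot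
  then show ?case using canon_worlds_prime unfolding prime_theory_def by simp
next
  case (And a b)
  then show ?case using iCB.theory_And_iff[OF canon_worlds_theory] by simp
next
  case (Or a b)
  then show ?case using iCB.prime_theory_Or_iff[OF canon_worlds_prime] by simp
next
  case (Imp a b)
  let ?V = "\<lambda>n. canon_ext (Atom n)"
  have "sat canon_frame ?V w (Imp a b)
      \<longleftrightarrow> (\<forall>v\<in>canon_worlds. \<Union>w \<subseteq> \<Union>v \<longrightarrow> sat canon_frame ?V v a \<longrightarrow> sat canon_frame ?V v b)"
    using Imp.prems unfolding sat.simps canon_frame_simps by simp
  also have "\<dots> \<longleftrightarrow> (\<forall>v\<in>canon_worlds. \<Union>w \<subseteq> \<Union>v \<longrightarrow> a \<in> \<Union>v \<longrightarrow> b \<in> \<Union>v)"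
    by (rule ball_cong[OF refl]) (simp add: Imp.IH)
  also have "\<dots> \<longleftrightarrow> (\<forall>T. prime_theory iCB T \<longrightarrow> \<Union>w \<subseteq> T \<longrightarrow> a \<in> T \<longrightarrow> b \<in> T)"
    by (rule ball_canon_worlds)
  also have "\<dots> \<longleftrightarrow> Imp a b \<in> \<Union>w"
    by (rule iCB.prime_theory_Imp_iff[OF canon_worlds_prime[OF Imp.prems], symmetric])
  finally show ?case .
next
  case (Cond a b)
  let ?V = "\<lambda>n. canon_ext (Atom n)"
  have ext_a: "truth_set canon_frame ?V a = canon_ext a"
    using Cond.IH(1) unfolding canon_ext_def canon_frame_simps by blast
  have "sat canon_frame ?V w (Cond a b) \<longleftrightarrow> (\<forall>v\<in>canon_succ a w. sat canon_frame ?V v b)"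
    using Cond.prems
    unfolding sat.simps(6) ext_a canon_frame_simps(3) canon_img_ext[OF Cond.prems] by blast
  also have "\<dots> \<longleftrightarrow> (\<forall>v\<in>canon_succ a w. b \<in> \<Union>v)"
    by (rule ball_cong[OF refl]) (simp add: Cond.IH(2) canon_succ_def)
  also have "\<dots> \<longleftrightarrow> canon_succ a w \<subseteq> canon_ext b"
    unfolding canon_ext_def canon_succ_def by blast
  also have "\<dots> \<longleftrightarrow> Cond a b \<in> \<Union>w"
    by (rule canon_succ_subset_ext_iff[OF Cond.prems])
  finally show ?case .
qed

theorem iCB_complete:
  assumes "\<forall>F :: form set set cframe. iCB_frame F \<longrightarrow> valid F \<phi>"
  shows "\<phi> \<in> iCB"
proof (rule ccontr)
  assume "\<phi> \<notin> iCB"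
  then have "\<not> derivable iCB {} \<phi>" by (simp add: iCB.derives_empty_iff)
  then obtain T where "prime_theory iCB T" "\<phi> \<notin> T"
    by (rule iCB.lindenbaum)
  then have T: "{T} \<in> canon_worlds" by (simp add: singleton_in_canon_worlds_iff)
  then have "iCB_frame canon_frame" by (intro canon_frame_iCB_frame) blast
  then have "valid canon_frame \<phi>" using assms by blast
  then have "sat canon_frame (\<lambda>n. canon_ext (Atom n)) {T} \<phi>"
    using upset_canon_ext T by (intro validD) (simp_all add: canon_frame_simps)
  then show False using canon_truth[OF T] \<open>\<phi> \<notin> T\<close> by simp
qed

theorem theorem6p11:
  fixes a :: form
  shows "(a \<in> iCB \<longrightarrow> (\<forall>F :: 'w cframe. iCB_frame F \<longrightarrow> valid F a))
       \<and> ((\<forall>F :: form set set cframe. iCB_frame F \<longrightarrow> valid F a) \<longrightarrow> a \<in> iCB)"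
  using iCB_sound iCB_complete by blast

end
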